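(* If $X\subset\mathbb{R}^n$ is a set of linearly separable labeled points in strong general position, then the orthogonal projections of the convex hulls of the positive and negative support vectors onto the separating hyperplane intersect at a single Radon point.
   Context: Setting: hard-margin support vector machine. We are given data points $\mathbf{x}_1,\dots,\mathbf{x}_m\in\mathbb{R}^n$ with labels $y_i\in\{-1,1\}$, assumed linearly separable. The SVM solves $\arg\min_{\mathbf{w},b}\frac12\|\mathbf{w}\|^2$ subject to $y_i(\mathbf{w}^T\mathbf{x}_i+b)\ge 1$ for all $i$. The separating hyperplane is $\{\mathbf{x}:\mathbf{w}^T\mathbf{x}+b=0\}$, and the support vectors are the $\mathbf{x}_i$ with $y_i(\mathbf{w}^T\mathbf{x}_i+b)=1$ (those lying on the margin). By the KKT conditions, $\mathbf{w}=\sum_i \alpha_i y_i\mathbf{x}_i$ with Lagrange multipliers $\alpha_i\ge 0$ and $\sum_i\alpha_i y_i=0$. A $k$-flat is a $k$-dimensional affine subspace. A labeled linearly separable set $X\subseteq\mathbb{R}^n$ is in strong general position if (i) for $k+l\le n$, no disjoint $k$-flats and $l$-flats (spanned by points of $X$) contain parallel vectors; and (ii) when the SVM is applied to $X$, the vector $\mathbf{w}$ can be uniquely written as $\mathbf{w}=\sum_{i:\alpha_i>0}\alpha_i y_i\mathbf{x}_i$ with $\alpha_i\ge 0$. Writing $X=X_-\cup X_+$ and letting $\rho$ be the orthogonal projection onto the separating hyperplane, a Radon point is a point in $\rho(\mathrm{conv}(X_-))\cap\rho(\mathrm{conv}(X_+))$, where $\mathrm{conv}$ denotes convex hull. *)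

theory Defs
  imports "HOL-Analysis.Analysis"
begin

text \<open>Labelled data: Xp = points with label +1, Xm = points with label -1, in R^n = real^'n.\<close>

definition lin_separable :: "(real^'n) set \<Rightarrow> (real^'n) set \<Rightarrow> bool" where
  "lin_separable Xp Xm \<longleftrightarrow>
     (\<exists>w b. (\<forall>x\<in>Xp. w \<bullet> x + b > 0) \<and> (\<forall>x\<in>Xm. w \<bullet> x + b < 0))"

definition svm_feasible :: "(real^'n) set \<Rightarrow> (real^'n) set \<Rightarrow> real^'n \<Rightarrow> real \<Rightarrow> bool" where
  "svm_feasible Xp Xm w b \<longleftrightarrow>
     (\<forall>x\<in>Xp. 1 * (w \<bullet> x + b) \<ge> 1) \<and> (\<forall>x\<in>Xm. (-1) * (w \<bullet> x + b) \<ge> 1)"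

definition svm_solution :: "(real^'n) set \<Rightarrow> (real^'n) set \<Rightarrow> real^'n \<Rightarrow> real \<Rightarrow> bool" where
  "svm_solution Xp Xm w b \<longleftrightarrow> svm_feasible Xp Xm w b \<and>
     (\<forall>w' b'. svm_feasible Xp Xm w' b' \<longrightarrow> (1/2) * (norm w)\<^sup>2 \<le> (1/2) * (norm w')\<^sup>2)"

definition support_pos :: "(real^'n) set \<Rightarrow> real^'n \<Rightarrow> real \<Rightarrow> (real^'n) set" where
  "support_pos Xp w b = {x \<in> Xp. 1 * (w \<bullet> x + b) = 1}"

definition support_neg :: "(real^'n) set \<Rightarrow> real^'n \<Rightarrow> real \<Rightarrow> (real^'n) set" where
  "support_neg Xm w b = {x \<in> Xm. (-1) * (w \<bullet> x + b) = 1}"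

definition hyperplane_proj :: "real^'n \<Rightarrow> real \<Rightarrow> real^'n \<Rightarrow> real^'n" where
  "hyperplane_proj w b x = x - ((w \<bullet> x + b) / (norm w)\<^sup>2) *\<^sub>R w"

definition kkt_multiplier ::
  "(real^'n) set \<Rightarrow> (real^'n) set \<Rightarrow> real^'n \<Rightarrow> real \<Rightarrow> (real^'n \<Rightarrow> real) \<Rightarrow> bool" where
  "kkt_multiplier Xp Xm w b \<alpha> \<longleftrightarrow>
     (\<forall>x. \<alpha> x \<ge> 0) \<and>
     (\<forall>x. x \<notin> support_pos Xp w b \<union> support_neg Xm w b \<longrightarrow> \<alpha> x = 0) \<and>
     (\<Sum>x\<in>Xp. \<alpha> x) - (\<Sum>x\<in>Xm. \<alpha> x) = 0 \<and>
     w = (\<Sum>x\<in>Xp. \<alpha> x *\<^sub>R x) - (\<Sum>x\<in>Xm. \<alpha> x *\<^sub>R x)"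

definition flat_dir :: "(real^'n) set \<Rightarrow> (real^'n) set" where
  "flat_dir A = {p - q | p q. p \<in> affine hull A \<and> q \<in> affine hull A}"

definition sgp_flats :: "(real^'n) set \<Rightarrow> bool" where
  "sgp_flats X \<longleftrightarrow>
     (\<forall>A B (k::nat) (l::nat). A \<subseteq> X \<longrightarrow> B \<subseteq> X \<longrightarrow>
        aff_dim A = int k \<longrightarrow> aff_dim B = int l \<longrightarrow> k + l \<le> CARD('n) \<longrightarrow>
        affine hull A \<inter> affine hull B = {} \<longrightarrow>
        \<not> (\<exists>u v c. u \<noteq> 0 \<and> v \<noteq> 0 \<and> u \<in> flat_dir A \<and> v \<in> flat_dir B \<and> v = c *\<^sub>R u))"

definition strong_general_position :: "(real^'n) set \<Rightarrow> (real^'n) set \<Rightarrow> bool" where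
  "strong_general_position Xp Xm \<longleftrightarrow>
     sgp_flats (Xp \<union> Xm) \<and>
     (\<forall>w b. svm_solution Xp Xm w b \<longrightarrow> (\<exists>!\<alpha>. kkt_multiplier Xp Xm w b \<alpha>))"

definition radon_points :: "(real^'n) set \<Rightarrow> (real^'n) set \<Rightarrow> real^'n \<Rightarrow> real \<Rightarrow> (real^'n) set" where
  "radon_points Xp Xm w b =
     hyperplane_proj w b ` (convex hull Xm) \<inter> hyperplane_proj w b ` (convex hull Xp)"

end

theory Submission
  imports Defs
begin

text \<open>Rescaling a KKT multiplier \<alpha> by its mass m (its common sum over the positive and over
  the negative points) turns it into convex combinations c of the positive and d of the negative
  support vectors with c - d = w / m, and every such pair arises from a multiplier. The support
  vectors lie on the margin hyperplanes w \<bullet> x + b = 1 and w \<bullet> x + b = -1, and ||w||^2 = 2 m, so the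
  projection onto the separating hyperplane translates the two hulls by -w/(2m) and +w/(2m): a
  common point of the projected hulls is exactly such a pair. Uniqueness of the multiplier
  therefore makes the point unique. Of the hypotheses only this uniqueness, i.e. condition (ii)
  of strong general position, and the SVM constraints are needed.\<close>

definition weighted_mean :: "('a \<Rightarrow> real) \<Rightarrow> 'a set \<Rightarrow> 'a::real_vector" where
  "weighted_mean \<alpha> S = (\<Sum>x\<in>S. (\<alpha> x / sum \<alpha> S) *\<^sub>R x)"

lemma weighted_mean_in_convex_hull:
  assumes "finite S" and "\<And>x. x \<in> S \<Longrightarrow> 0 \<le> \<alpha> x" and "sum \<alpha> S > 0"
  shows "weighted_mean \<alpha> S \<in> convex hull S"
  unfolding convex_hull_finite[OF assms(1)] weighted_mean_def
  using assms(2,3)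
  by (auto simp: sum_divide_distrib[symmetric] intro!: exI[of _ "\<lambda>x. \<alpha> x / sum \<alpha> S"])

lemma weighted_mean_scaled:
  assumes "sum \<alpha> S = m" and "m \<noteq> 0"
  shows "weighted_mean \<alpha> S = (1 / m) *\<^sub>R (\<Sum>x\<in>S. \<alpha> x *\<^sub>R x)"
  using assms by (simp add: weighted_mean_def scaleR_sum_right)

lemma convex_hull_level_set:
  fixes S :: "'a::real_inner set"
  assumes "\<And>x. x \<in> S \<Longrightarrow> w \<bullet> x + b = c" and "z \<in> convex hull S"
  shows "w \<bullet> z + b = c"
proof -
  have "convex hull S \<subseteq> {x. w \<bullet> x = c - b}"
    by (intro hull_minimal convex_hyperplane) (auto simp: eq_diff_eq assms(1))
  then show ?thesis using assms(2) by auto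
qed

lemma hyperplane_proj_level_set:
  assumes "w \<bullet> x + b = c"
  shows "hyperplane_proj w b x = x - (c / (norm w)\<^sup>2) *\<^sub>R w"
  using assms by (simp add: hyperplane_proj_def)

lemma hyperplane_proj_eq_iff_margins:
  assumes "w \<bullet> x + b = 1" and "w \<bullet> y + b = -1"
  shows "hyperplane_proj w b x = hyperplane_proj w b y \<longleftrightarrow> x - y = (2 / (norm w)\<^sup>2) *\<^sub>R w"
proof -
  have "x - y - (2 / (norm w)\<^sup>2) *\<^sub>R w = hyperplane_proj w b x - hyperplane_proj w b y"
    using assms by (simp add: hyperplane_proj_level_set algebra_simps flip: scaleR_add_left)
  then show ?thesis by (metis eq_iff_diff_eq_0)
qed

lemma svm_feasible_iff:
  "svm_feasible Xp Xm w b \<longleftrightarrow> (\<forall>x\<in>Xp. 1 \<le> w \<bullet> x + b) \<and> (\<forall>x\<in>Xm. w \<bullet> x + b \<le> -1)"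
  by (auto simp: svm_feasible_def)

lemma svm_feasible_nonzero:
  assumes "svm_feasible Xp Xm w b" and "Xp \<noteq> {}" and "Xm \<noteq> {}"
  shows "w \<noteq> 0"
proof
  assume "w = 0"
  obtain x y where "x \<in> Xp" "y \<in> Xm" using assms(2,3) by blast
  then show False using assms(1) \<open>w = 0\<close> by (force simp: svm_feasible_iff)
qed

lemma svm_feasible_disjoint:
  assumes "svm_feasible Xp Xm w b"
  shows "Xp \<inter> Xm = {}"
  using assms by (force simp: svm_feasible_iff)

lemma support_pos_on_margin: "x \<in> support_pos Xp w b \<Longrightarrow> w \<bullet> x + b = 1"
  and support_neg_on_margin: "x \<in> support_neg Xm w b \<Longrightarrow> w \<bullet> x + b = -1"
  by (auto simp: support_pos_def support_neg_def)

lemma kkt_multiplier_on_margins: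
  assumes "\<And>x. x \<in> P \<Longrightarrow> w \<bullet> x + b = 1" and "\<And>x. x \<in> N \<Longrightarrow> w \<bullet> x + b = -1"
  shows "kkt_multiplier P N w b \<alpha> \<longleftrightarrow> (\<forall>x. 0 \<le> \<alpha> x) \<and> (\<forall>x. x \<notin> P \<union> N \<longrightarrow> \<alpha> x = 0)
           \<and> sum \<alpha> P = sum \<alpha> N \<and> w = (\<Sum>x\<in>P. \<alpha> x *\<^sub>R x) - (\<Sum>x\<in>N. \<alpha> x *\<^sub>R x)"
proof -
  have "support_pos P w b = P" and "support_neg N w b = N"
    by (auto simp: support_pos_def support_neg_def dest: assms)
  then show ?thesis by (simp add: kkt_multiplier_def)
qed

lemma kkt_multiplier_support_vectors:
  assumes "finite Xp" and "finite Xm" and "svm_feasible Xp Xm w b"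
  shows "kkt_multiplier Xp Xm w b \<alpha> \<longleftrightarrow>
           kkt_multiplier (support_pos Xp w b) (support_neg Xm w b) w b \<alpha>"
proof -
  define Sp where "Sp = support_pos Xp w b"
  define Sn where "Sn = support_neg Xm w b"
  have Sp_sub: "Sp \<subseteq> Xp" and Sn_sub: "Sn \<subseteq> Xm"
    by (auto simp: Sp_def Sn_def support_pos_def support_neg_def)
  have sums: "sum \<alpha> Xp = sum \<alpha> Sp \<and> sum \<alpha> Xm = sum \<alpha> Sn
      \<and> (\<Sum>x\<in>Xp. \<alpha> x *\<^sub>R x) = (\<Sum>x\<in>Sp. \<alpha> x *\<^sub>R x) \<and> (\<Sum>x\<in>Xm. \<alpha> x *\<^sub>R x) = (\<Sum>x\<in>Sn. \<alpha> x *\<^sub>R x)"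
    if vanish: "\<forall>x. x \<notin> Sp \<union> Sn \<longrightarrow> \<alpha> x = 0"
  proof -
    have "\<alpha> x = 0" if "x \<in> Xp - Sp \<or> x \<in> Xm - Sn" for x
      using vanish that Sp_sub Sn_sub svm_feasible_disjoint[OF assms(3)] by blast
    then show ?thesis
      using Sp_sub Sn_sub assms(1,2) by (simp add: sum.mono_neutral_right)
  qed
  have supp: "support_pos Sp w b = Sp" "support_neg Sn w b = Sn"
    by (auto simp: Sp_def Sn_def support_pos_def support_neg_def)
  show ?thesis
    unfolding kkt_multiplier_def Sp_def[symmetric] Sn_def[symmetric] supp
    by (cases "\<forall>x. x \<notin> Sp \<union> Sn \<longrightarrow> \<alpha> x = 0") (simp add: sums, blast)
qed

lemma kkt_multiplier_norm_eq:
  assumes P: "\<And>x. x \<in> P \<Longrightarrow> w \<bullet> x + b = 1" and N: "\<And>x. x \<in> N \<Longrightarrow> w \<bullet> x + b = -1"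
    and "kkt_multiplier P N w b \<alpha>"
  shows "(norm w)\<^sup>2 = 2 * sum \<alpha> P"
proof -
  have sums: "sum \<alpha> P = sum \<alpha> N" and w: "w = (\<Sum>x\<in>P. \<alpha> x *\<^sub>R x) - (\<Sum>x\<in>N. \<alpha> x *\<^sub>R x)"
    using assms by (simp_all add: kkt_multiplier_on_margins)
  have "(norm w)\<^sup>2 = w \<bullet> ((\<Sum>x\<in>P. \<alpha> x *\<^sub>R x) - (\<Sum>x\<in>N. \<alpha> x *\<^sub>R x))"
    by (metis w power2_norm_eq_inner)
  also have "\<dots> = (\<Sum>x\<in>P. \<alpha> x * (w \<bullet> x)) - (\<Sum>x\<in>N. \<alpha> x * (w \<bullet> x))"
    by (simp add: inner_diff_right inner_sum_right)
  also have "\<dots> = (\<Sum>x\<in>P. \<alpha> x * (1 - b)) - (\<Sum>x\<in>N. \<alpha> x * (-1 - b))"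
  proof -
    have "w \<bullet> x = 1 - b" if "x \<in> P" for x using P[OF that] by simp
    moreover have "w \<bullet> x = -1 - b" if "x \<in> N" for x using N[OF that] by simp
    ultimately show ?thesis by simp
  qed
  also have "\<dots> = 2 * sum \<alpha> P"
    unfolding sum_distrib_right[symmetric] sums by (simp add: algebra_simps)
  finally show ?thesis .
qed

lemma kkt_multiplier_convex_pair:
  assumes "finite P" and "finite N"
    and P: "\<And>x. x \<in> P \<Longrightarrow> w \<bullet> x + b = 1" and N: "\<And>x. x \<in> N \<Longrightarrow> w \<bullet> x + b = -1"
    and "w \<noteq> 0" and kkt: "kkt_multiplier P N w b \<alpha>"
  shows "weighted_mean \<alpha> P \<in> convex hull P" and "weighted_mean \<alpha> N \<in> convex hull N"
    and "weighted_mean \<alpha> P - weighted_mean \<alpha> N = (2 / (norm w)\<^sup>2) *\<^sub>R w"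
proof -
  define m where "m = sum \<alpha> P"
  have nonneg: "\<And>x. 0 \<le> \<alpha> x" and sums: "sum \<alpha> N = m"
    and w: "w = (\<Sum>x\<in>P. \<alpha> x *\<^sub>R x) - (\<Sum>x\<in>N. \<alpha> x *\<^sub>R x)"
    using kkt by (simp_all add: kkt_multiplier_on_margins[OF P N] m_def)
  have norm_w: "(norm w)\<^sup>2 = 2 * m"
    using kkt_multiplier_norm_eq[OF P N kkt] by (simp add: m_def)
  moreover have "(norm w)\<^sup>2 > 0" using \<open>w \<noteq> 0\<close> by simp
  ultimately have "m > 0" by linarith
  then show "weighted_mean \<alpha> P \<in> convex hull P" and "weighted_mean \<alpha> N \<in> convex hull N"
    using assms(1,2) nonneg sums by (auto simp: m_def intro: weighted_mean_in_convex_hull)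
  have "weighted_mean \<alpha> P - weighted_mean \<alpha> N = (1 / m) *\<^sub>R w"
    using \<open>m > 0\<close> sums
    by (simp add: weighted_mean_scaled m_def w scaleR_diff_right)
  then show "weighted_mean \<alpha> P - weighted_mean \<alpha> N = (2 / (norm w)\<^sup>2) *\<^sub>R w"
    by (simp add: norm_w)
qed

lemma convex_pair_kkt_multiplier:
  assumes "finite P" and "finite N"
    and P: "\<And>x. x \<in> P \<Longrightarrow> w \<bullet> x + b = 1" and N: "\<And>x. x \<in> N \<Longrightarrow> w \<bullet> x + b = -1"
    and "w \<noteq> 0" and "x \<in> convex hull P" and "y \<in> convex hull N"
    and diff: "x - y = (2 / (norm w)\<^sup>2) *\<^sub>R w"
  shows "\<exists>\<beta>. kkt_multiplier P N w b \<beta> \<and> weighted_mean \<beta> P = x"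
proof -
  define m where "m = (norm w)\<^sup>2 / 2"
  have "m > 0" using \<open>w \<noteq> 0\<close> by (simp add: m_def)
  obtain u where u: "\<forall>z\<in>P. 0 \<le> u z" "sum u P = 1" "(\<Sum>z\<in>P. u z *\<^sub>R z) = x"
    using \<open>x \<in> convex hull P\<close> by (auto simp: convex_hull_finite[OF assms(1)])
  obtain v where v: "\<forall>z\<in>N. 0 \<le> v z" "sum v N = 1" "(\<Sum>z\<in>N. v z *\<^sub>R z) = y"
    using \<open>y \<in> convex hull N\<close> by (auto simp: convex_hull_finite[OF assms(2)])
  have "P \<inter> N = {}" using P N by force
  define \<beta> where "\<beta> z = (if z \<in> P then m * u z else if z \<in> N then m * v z else 0)" for z
  have \<beta>P: "\<beta> z = m * u z" if "z \<in> P" for z using that by (simp add: \<beta>_def)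
  have \<beta>N: "\<beta> z = m * v z" if "z \<in> N" for z using that \<open>P \<inter> N = {}\<close> by (auto simp: \<beta>_def)
  have sum_P: "sum \<beta> P = m" and sum_N: "sum \<beta> N = m"
    using \<beta>P \<beta>N u(2) v(2) by (simp_all add: sum_distrib_left[symmetric])
  have "(\<Sum>z\<in>P. \<beta> z *\<^sub>R z) - (\<Sum>z\<in>N. \<beta> z *\<^sub>R z) = m *\<^sub>R (x - y)"
    using \<beta>P \<beta>N by (simp add: scaleR_sum_right scaleR_diff_right flip: u(3) v(3))
  also have "\<dots> = w"
    using \<open>m > 0\<close> by (simp add: diff m_def)
  finally have "kkt_multiplier P N w b \<beta>"
    using u(1) v(1) \<open>m > 0\<close> sum_P sum_N
    by (auto simp: kkt_multiplier_on_margins[OF P N] \<beta>_def)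
  moreover have "weighted_mean \<beta> P = x"
    using \<beta>P u(3) \<open>m > 0\<close> by (simp add: weighted_mean_scaled[OF sum_P] scaleR_sum_right)
  ultimately show ?thesis by blast
qed

lemma hyperplane_proj_convex_hulls_inter:
  assumes "finite P" and "finite N"
    and P: "\<And>x. x \<in> P \<Longrightarrow> w \<bullet> x + b = 1" and N: "\<And>x. x \<in> N \<Longrightarrow> w \<bullet> x + b = -1"
    and "w \<noteq> 0" and kkt: "kkt_multiplier P N w b \<alpha>"
    and unique: "\<And>\<beta>. kkt_multiplier P N w b \<beta> \<Longrightarrow> \<beta> = \<alpha>"
  shows "hyperplane_proj w b ` (convex hull N) \<inter> hyperplane_proj w b ` (convex hull P)
           = {hyperplane_proj w b (weighted_mean \<alpha> P)}"
proof -
  let ?\<rho> = "hyperplane_proj w b"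
  have proj_eq: "?\<rho> x = ?\<rho> y \<longleftrightarrow> x - y = (2 / (norm w)\<^sup>2) *\<^sub>R w"
    if "x \<in> convex hull P" and "y \<in> convex hull N" for x y
    using hyperplane_proj_eq_iff_margins convex_hull_level_set[OF P that(1)]
      convex_hull_level_set[OF N that(2)] by blast
  note pair = kkt_multiplier_convex_pair[OF assms(1-5) kkt]
  show ?thesis
  proof (intro equalityI subsetI)
    fix q assume "q \<in> {?\<rho> (weighted_mean \<alpha> P)}"
    moreover have "?\<rho> (weighted_mean \<alpha> P) = ?\<rho> (weighted_mean \<alpha> N)"
      using pair proj_eq by blast
    ultimately show "q \<in> ?\<rho> ` (convex hull N) \<inter> ?\<rho> ` (convex hull P)"
      using pair(1,2) by (metis IntI image_eqI singletonD)
  next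
    fix q assume "q \<in> ?\<rho> ` (convex hull N) \<inter> ?\<rho> ` (convex hull P)"
    then obtain x y where x: "x \<in> convex hull P" and y: "y \<in> convex hull N"
      and q: "q = ?\<rho> x" and "?\<rho> x = ?\<rho> y" by auto
    then have "x - y = (2 / (norm w)\<^sup>2) *\<^sub>R w" using proj_eq by blast
    then obtain \<beta> where "kkt_multiplier P N w b \<beta>" and "weighted_mean \<beta> P = x"
      using convex_pair_kkt_multiplier[OF assms(1-5) x y] by blast
    then have "x = weighted_mean \<alpha> P" using unique by blast
    then show "q \<in> {?\<rho> (weighted_mean \<alpha> P)}" using q by simp
  qed
qed

lemma radon_points_mono:
  assumes "A \<subseteq> Xp" and "B \<subseteq> Xm"
  shows "hyperplane_proj w b ` (convex hull B) \<inter> hyperplane_proj w b ` (convex hull A)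
           \<subseteq> radon_points Xp Xm w b"
  unfolding radon_points_def using hull_mono[OF assms(1)] hull_mono[OF assms(2)] by blast

theorem lemma5p2:
  fixes Xp Xm :: "(real^'n) set" and w :: "real^'n" and b :: real
  assumes "finite Xp" and "finite Xm" and "Xp \<noteq> {}" and "Xm \<noteq> {}"
    and "lin_separable Xp Xm"
    and "strong_general_position Xp Xm"
    and "svm_solution Xp Xm w b"
  shows "\<exists>p. hyperplane_proj w b ` (convex hull (support_neg Xm w b))
             \<inter> hyperplane_proj w b ` (convex hull (support_pos Xp w b)) = {p}
           \<and> p \<in> radon_points Xp Xm w b"
proof -
  have feasible: "svm_feasible Xp Xm w b" using assms(7) by (simp add: svm_solution_def)
  obtain \<alpha> where kkt: "kkt_multiplier Xp Xm w b \<alpha>"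
    and unique: "\<And>\<beta>. kkt_multiplier Xp Xm w b \<beta> \<Longrightarrow> \<beta> = \<alpha>"
    using assms(6,7) unfolding strong_general_position_def by metis
  note restrict = kkt_multiplier_support_vectors[OF assms(1,2) feasible]
  have "finite (support_pos Xp w b)" and "finite (support_neg Xm w b)"
    using assms(1,2) by (simp_all add: support_pos_def support_neg_def)
  moreover have "kkt_multiplier (support_pos Xp w b) (support_neg Xm w b) w b \<alpha>"
    using kkt restrict by blast
  moreover have "\<beta> = \<alpha>" if "kkt_multiplier (support_pos Xp w b) (support_neg Xm w b) w b \<beta>" for \<beta>
    using that unique restrict by blast
  ultimately have inter: "hyperplane_proj w b ` (convex hull (support_neg Xm w b))
               \<inter> hyperplane_proj w b ` (convex hull (support_pos Xp w b))
             = {hyperplane_proj w b (weighted_mean \<alpha> (support_pos Xp w b))}"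
    using hyperplane_proj_convex_hulls_inter support_pos_on_margin support_neg_on_margin
      svm_feasible_nonzero[OF feasible assms(3,4)] by metis
  have "support_pos Xp w b \<subseteq> Xp" and "support_neg Xm w b \<subseteq> Xm"
    by (auto simp: support_pos_def support_neg_def)
  with inter show ?thesis
    using radon_points_mono[of "support_pos Xp w b" Xp "support_neg Xm w b" Xm w b] by auto
qed

end
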